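(* Let $X_0,X_1,\ldots$ be a stationary mean-zero Gaussian sequence with covariance $\Gamma(k)=\mathrm{E}[X_0X_k]$, $\Gamma(0)=1$, having a spectral density $f$ (so $\Gamma(k)=\int_{-\pi}^{\pi}e^{-ik\phi}f(\phi)\,d\phi$) which is continuous and strictly positive on $[-\pi,\pi]$. Let $K=K_n$ be real numbers with $K=o\!\left(\sqrt{n/\log\log n}\right)$. With $$A(x)=\sum_{k=0}^{n}\sum_{j=0}^{n}\Gamma(k-j)x^{k+j},\quad B(x)=\sum_{k=0}^{n}\sum_{j=0}^{n}\Gamma(k-j)\,k\,x^{k+j-1},\quad C(x)=\sum_{k=0}^{n}\sum_{j=0}^{n}\Gamma(k-j)\,kj\,x^{k+j-2},$$ and $$F_2(x)=\frac{1}{\pi}\,\frac{\sqrt{2}\,|B(x)K|}{A(x)^{3/2}}\exp\!\left(-\frac{K^2}{2A(x)}\right)\mathrm{erf}\!\left(\frac{|B(x)K|}{\sqrt{2A(x)\left(A(x)C(x)-B(x)^2\right)}}\right),$$ we have, as $n\to\infty$, $$\int_{-1}^{1}F_2(x)\,dx=o(\log\log n).$$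
   Context: $A,B,C$ are $\mathrm{E}[P_n(x)^2]$, $\mathrm{E}[P_n(x)P_n'(x)]$, $\mathrm{E}[P_n'(x)^2]$ for $P_n(x)=\sum_{k=0}^nX_kx^k$. $\mathrm{erf}(u)=\frac{2}{\sqrt{\pi}}\int_0^u e^{-t^2}dt$. *)

theory Defs
  imports "HOL-Analysis.Analysis" "HOL-Library.Landau_Symbols"
begin

definition erf :: "real \<Rightarrow> real" where
  "erf u = 2 / sqrt pi * (LBINT t=0..u. exp (- (t^2)))"

definition covA :: "(int \<Rightarrow> real) \<Rightarrow> nat \<Rightarrow> real \<Rightarrow> real" where
  "covA \<Gamma> n x = (\<Sum>k\<le>n. \<Sum>j\<le>n. \<Gamma> (int k - int j) * x ^ (k + j))"

definition covB :: "(int \<Rightarrow> real) \<Rightarrow> nat \<Rightarrow> real \<Rightarrow> real" where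
  "covB \<Gamma> n x = (\<Sum>k\<le>n. \<Sum>j\<le>n. \<Gamma> (int k - int j) * real k * x ^ (k + j - 1))"

definition covC :: "(int \<Rightarrow> real) \<Rightarrow> nat \<Rightarrow> real \<Rightarrow> real" where
  "covC \<Gamma> n x = (\<Sum>k\<le>n. \<Sum>j\<le>n. \<Gamma> (int k - int j) * real k * real j * x ^ (k + j - 2))"

definition F2 :: "(int \<Rightarrow> real) \<Rightarrow> nat \<Rightarrow> real \<Rightarrow> real \<Rightarrow> real" where
  "F2 \<Gamma> n K x =
     (let A = covA \<Gamma> n x; B = covB \<Gamma> n x; C = covC \<Gamma> n x in
      1 / pi * (sqrt 2 * \<bar>B * K\<bar> / A powr (3/2)) * exp (- (K^2) / (2 * A))
      * erf (\<bar>B * K\<bar> / sqrt (2 * A * (A * C - B^2))))"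

end

theory Submission
  imports Defs "HOL-Probability.Distributions" "HOL-Real_Asymp.Real_Asymp"
begin

text \<open>
  Since the spectral density satisfies \<open>0 < m \<le> f \<le> M\<close>, the covariance form
  \<open>Q(a) = \<Sum>\<Sum> \<Gamma>(k-j) a\<^sub>k a\<^sub>j = \<integral> |\<Sum> a\<^sub>k e\<^sup>i\<^sup>k\<^sup>\<phi>|\<^sup>2 f\<close> lies between \<open>2\<pi>m |a|\<^sup>2\<close> and \<open>2\<pi>M |a|\<^sup>2\<close>.
  Applied to \<open>a = (x\<^sup>k)\<close> and to its derivative this gives \<open>A(x) \<asymp> S\<close> and \<open>C(x) \<le> 4\<pi>M S\<^sup>3\<close>
  for \<open>S = \<Sum>\<^sub>k\<^sub>\<le>\<^sub>n x\<^sup>2\<^sup>k\<close>, while Cauchy-Schwarz gives \<open>B\<^sup>2 \<le> A C\<close>. Bounding \<open>erf\<close> by 1 and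
  \<open>exp(-K\<^sup>2/2A)\<close> by \<open>2A/(2A + K\<^sup>2)\<close> leaves \<open>F\<^sub>2(x) \<lesssim> |K| S\<^sup>3\<^sup>/\<^sup>2 / (S + K\<^sup>2)\<close>. As
  \<open>S \<le> 2/w\<close> with \<open>w = 1/(n+1) + 1 - x\<^sup>2\<close>, this is dominated by \<open>|K| / (\<surd>w (c + K\<^sup>2 w))\<close>, whose
  integral over \<open>w > 0\<close> is \<open>\<pi>/\<surd>c\<close> whatever \<open>K\<close> is. Hence \<open>\<integral> F\<^sub>2\<close> is bounded uniformly in
  \<open>n\<close> and \<open>K\<close>, and in particular it is \<open>o(log log n)\<close>.
\<close>

lemma erf_eq_lebesgue_integral:
  assumes "0 \<le> u"
  shows "erf u = 2 / sqrt pi * (\<integral>t. indicator {0..u} t * exp (- t\<^sup>2) \<partial>lborel)"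
proof -
  have "(LBINT t=0..u. exp (- t\<^sup>2)) = (LBINT t:{0..u}. exp (- t\<^sup>2))"
    using interval_integral_Icc[of 0 u] assms by (simp add: zero_ereal_def)
  then show ?thesis
    by (simp add: erf_def set_lebesgue_integral_def)
qed

lemma erf_nonneg: "0 \<le> u \<Longrightarrow> 0 \<le> erf u"
  by (simp add: erf_eq_lebesgue_integral)

lemma erf_le_1:
  assumes "0 \<le> u"
  shows "erf u \<le> 1"
proof -
  have gauss: "has_bochner_integral lborel (\<lambda>t. indicator {0..} t * exp (- t\<^sup>2)) (sqrt pi / 2)"
    using gaussian_moment_0 by simp
  have "set_integrable lborel {0..u} (\<lambda>t::real. exp (- t\<^sup>2))"
    by (intro borel_integrable_atLeastAtMost' continuous_intros)
  then have "(\<integral>t. indicator {0..u} t * exp (- t\<^sup>2) \<partial>lborel) \<le> (\<integral>t. indicator {0..} t * exp (- t\<^sup>2) \<partial>lborel)"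
    using gauss by (intro integral_mono) (auto simp: set_integrable_def indicator_def has_bochner_integral_iff)
  also have "\<dots> = sqrt pi / 2"
    using gauss by (simp add: has_bochner_integral_iff)
  finally show ?thesis
    using assms by (simp add: erf_eq_lebesgue_integral field_simps)
qed

section \<open>Toeplitz forms of a spectral density\<close>

lemma spectral_density_cos_has_integral:
  fixes \<Gamma> :: "int \<Rightarrow> real" and f :: "real \<Rightarrow> real"
  assumes f_cont: "continuous_on {-pi..pi} f"
    and spectral: "complex_of_real (\<Gamma> k) =
        integral {-pi..pi} (\<lambda>\<phi>. exp (- \<i> * of_int k * of_real \<phi>) * of_real (f \<phi>))"
  shows "((\<lambda>\<phi>. cos (of_int k * \<phi>) * f \<phi>) has_integral \<Gamma> k) {-pi..pi}"
proof -
  let ?F = "\<lambda>\<phi>. exp (- \<i> * of_int k * of_real \<phi>) * of_real (f \<phi>)"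
  have "continuous_on {-pi..pi} ?F"
    by (intro continuous_intros f_cont)
  then have "((\<lambda>\<phi>. Re (?F \<phi>)) has_integral Re (integral {-pi..pi} ?F)) {-pi..pi}"
    by (intro has_integral_Re integrable_integral integrable_continuous_interval)
  moreover have "(\<lambda>\<phi>. Re (?F \<phi>)) = (\<lambda>\<phi>. cos (of_int k * \<phi>) * f \<phi>)"
  proof
    fix \<phi>
    have "exp (- \<i> * of_int k * of_real \<phi>) = cis (- (of_int k * \<phi>))"
      by (simp add: cis_conv_exp algebra_simps)
    then show "Re (?F \<phi>) = cos (of_int k * \<phi>) * f \<phi>"
      by simp
  qed
  ultimately show ?thesis
    by (simp only: spectral[symmetric] Re_complex_of_real)
qed

lemma cos_int_has_integral:
  fixes m :: int
  shows "((\<lambda>\<phi>. cos (of_int m * \<phi>)) has_integral (if m = 0 then 2 * pi else 0)) {-pi..pi}"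
proof (cases "m = 0")
  case True
  then show ?thesis
    using has_integral_const_real[of "1::real" "-pi" pi] by simp
next
  case False
  have "((\<lambda>\<phi>. cos (of_int m * \<phi>)) has_integral
          sin (of_int m * pi) / m - sin (of_int m * (-pi)) / m) {-pi..pi}"
  proof (rule fundamental_theorem_of_calculus)
    fix x :: real
    have "((\<lambda>\<phi>. sin (of_int m * \<phi>) / m) has_real_derivative cos (of_int m * x)) (at x)"
      using False by (auto intro!: derivative_eq_intros)
    then show "((\<lambda>\<phi>. sin (of_int m * \<phi>) / m) has_vector_derivative cos (of_int m * x))
        (at x within {-pi..pi})"
      by (simp add: has_real_derivative_iff_has_vector_derivative[symmetric] has_field_derivative_at_within)
  qed simp
  moreover have "sin (of_int m * pi) = 0"
    by (metis sin_npi_int mult.commute)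
  ultimately show ?thesis
    using False by simp
qed

definition toeplitz_form :: "(int \<Rightarrow> real) \<Rightarrow> nat \<Rightarrow> (nat \<Rightarrow> real) \<Rightarrow> (nat \<Rightarrow> real) \<Rightarrow> real" where
  "toeplitz_form \<Gamma> n a b = (\<Sum>k\<le>n. \<Sum>j\<le>n. \<Gamma> (int k - int j) * a k * b j)"

lemma trig_double_sum_eq_sum_squares:
  fixes a :: "nat \<Rightarrow> real"
  shows "(\<Sum>k\<le>n. \<Sum>j\<le>n. a k * a j * cos (of_int (int k - int j) * \<phi>)) =
    (\<Sum>k\<le>n. a k * cos (k * \<phi>))\<^sup>2 + (\<Sum>k\<le>n. a k * sin (k * \<phi>))\<^sup>2"
proof -
  have "a k * a j * cos (of_int (int k - int j) * \<phi>) =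
      a k * cos (k * \<phi>) * (a j * cos (j * \<phi>)) + a k * sin (k * \<phi>) * (a j * sin (j * \<phi>))"
    for k j :: nat
    by (simp add: left_diff_distrib cos_diff algebra_simps)
  then show ?thesis
    by (simp add: power2_eq_square sum_product sum.distrib)
qed

definition toeplitz_form_bounded :: "(int \<Rightarrow> real) \<Rightarrow> nat \<Rightarrow> real \<Rightarrow> real \<Rightarrow> bool" where
  "toeplitz_form_bounded \<Gamma> n lo hi \<longleftrightarrow>
    (\<forall>a. lo * (\<Sum>k\<le>n. (a k)\<^sup>2) \<le> toeplitz_form \<Gamma> n a a \<and>
      toeplitz_form \<Gamma> n a a \<le> hi * (\<Sum>k\<le>n. (a k)\<^sup>2))"

lemma toeplitz_form_bounded_spectral_density:
  fixes \<Gamma> :: "int \<Rightarrow> real" and f :: "real \<Rightarrow> real"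
  assumes \<Gamma>: "\<And>k. ((\<lambda>\<phi>. cos (of_int k * \<phi>) * f \<phi>) has_integral \<Gamma> k) {-pi..pi}"
    and f_bounds: "\<And>\<phi>. \<phi> \<in> {-pi..pi} \<Longrightarrow> m \<le> f \<phi> \<and> f \<phi> \<le> M"
  shows "toeplitz_form_bounded \<Gamma> n (2 * pi * m) (2 * pi * M)"
  unfolding toeplitz_form_bounded_def
proof (intro allI conjI)
  fix a :: "nat \<Rightarrow> real"
  txt \<open>\<open>P \<phi> = |\<Sum> a\<^sub>k e\<^sup>i\<^sup>k\<^sup>\<phi>|\<^sup>2\<close>; its integral against \<open>f\<close> is the form, against 1 it is \<open>2\<pi> |a|\<^sup>2\<close>.\<close>
  define P where "P \<phi> = (\<Sum>k\<le>n. \<Sum>j\<le>n. a k * a j * cos (of_int (int k - int j) * \<phi>))" for \<phi>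
  have P_nonneg: "0 \<le> P \<phi>" for \<phi>
    unfolding P_def trig_double_sum_eq_sum_squares by simp
  have "((\<lambda>\<phi>. P \<phi> * f \<phi>) has_integral
      (\<Sum>k\<le>n. \<Sum>j\<le>n. a k * a j * \<Gamma> (int k - int j))) {-pi..pi}"
    unfolding P_def sum_distrib_right mult.assoc by (intro has_integral_sum finite_atMost has_integral_mult_right \<Gamma>)
  then have PF: "((\<lambda>\<phi>. P \<phi> * f \<phi>) has_integral toeplitz_form \<Gamma> n a a) {-pi..pi}"
    by (simp add: toeplitz_form_def algebra_simps)
  have "(\<Sum>k\<le>n. \<Sum>j\<le>n. a k * a j * (if int k - int j = 0 then 2 * pi else 0)) =
      2 * pi * (\<Sum>k\<le>n. (a k)\<^sup>2)"
    by (simp add: sum_distrib_left power2_eq_square if_distrib sum.delta algebra_simps cong: if_cong)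
  moreover have "(P has_integral (\<Sum>k\<le>n. \<Sum>j\<le>n. a k * a j * (if int k - int j = 0 then 2 * pi else 0))) {-pi..pi}"
    unfolding P_def by (intro has_integral_sum finite_atMost has_integral_mult_right cos_int_has_integral)
  ultimately have P: "(P has_integral 2 * pi * (\<Sum>k\<le>n. (a k)\<^sup>2)) {-pi..pi}"
    by simp
  have "m * (2 * pi * (\<Sum>k\<le>n. (a k)\<^sup>2)) \<le> toeplitz_form \<Gamma> n a a"
    by (rule has_integral_le[OF has_integral_mult_right[OF P] PF])
      (use f_bounds P_nonneg in \<open>auto simp: mult.commute[of m] intro!: mult_left_mono\<close>)
  then show "2 * pi * m * (\<Sum>k\<le>n. (a k)\<^sup>2) \<le> toeplitz_form \<Gamma> n a a"
    by (simp add: mult_ac)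
  have "toeplitz_form \<Gamma> n a a \<le> M * (2 * pi * (\<Sum>k\<le>n. (a k)\<^sup>2))"
    by (rule has_integral_le[OF PF has_integral_mult_right[OF P]])
      (use f_bounds P_nonneg in \<open>auto simp: mult.commute[of M] intro!: mult_left_mono\<close>)
  then show "toeplitz_form \<Gamma> n a a \<le> 2 * pi * M * (\<Sum>k\<le>n. (a k)\<^sup>2)"
    by (simp add: mult_ac)
qed

lemma toeplitz_form_bounded_nonneg:
  assumes "toeplitz_form_bounded \<Gamma> n lo hi" and "0 \<le> lo"
  shows "0 \<le> toeplitz_form \<Gamma> n a a"
proof -
  have "0 \<le> lo * (\<Sum>k\<le>n. (a k)\<^sup>2)"
    using assms(2) by (simp add: sum_nonneg)
  then show ?thesis
    using assms(1) unfolding toeplitz_form_bounded_def by (meson order_trans)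
qed

lemma toeplitz_form_bounded_le:
  assumes "toeplitz_form_bounded \<Gamma> n lo hi"
  shows "lo \<le> hi"
proof -
  have "lo * (\<Sum>k\<le>n. 1\<^sup>2) \<le> hi * (\<Sum>k\<le>n. 1\<^sup>2)"
    using assms[unfolded toeplitz_form_bounded_def, THEN spec, of "\<lambda>_. 1"] by (meson order_trans)
  then show ?thesis
    by (simp add: mult_le_cancel_right)
qed

lemma toeplitz_form_commute:
  assumes "\<And>k. \<Gamma> (- k) = \<Gamma> k"
  shows "toeplitz_form \<Gamma> n a b = toeplitz_form \<Gamma> n b a"
proof -
  have "\<Gamma> (int k - int j) = \<Gamma> (int j - int k)" for j k
    using assms[of "int j - int k"] by simp
  then show ?thesis
    unfolding toeplitz_form_def by (subst sum.swap) (simp add: mult_ac)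
qed

lemma toeplitz_form_combination:
  "toeplitz_form \<Gamma> n (\<lambda>k. \<alpha> * a k + \<beta> * b k) (\<lambda>k. \<alpha> * a k + \<beta> * b k) =
   \<alpha>\<^sup>2 * toeplitz_form \<Gamma> n a a + \<alpha> * \<beta> * (toeplitz_form \<Gamma> n a b + toeplitz_form \<Gamma> n b a)
     + \<beta>\<^sup>2 * toeplitz_form \<Gamma> n b b"
  unfolding toeplitz_form_def
  by (simp add: sum.distrib sum_distrib_left power2_eq_square algebra_simps)

lemma toeplitz_form_Cauchy_Schwarz:
  assumes sym: "\<And>k. \<Gamma> (- k) = \<Gamma> k"
    and psd: "\<And>a. 0 \<le> toeplitz_form \<Gamma> n a a"
    and pos: "0 < toeplitz_form \<Gamma> n a a"
  shows "(toeplitz_form \<Gamma> n a b)\<^sup>2 \<le> toeplitz_form \<Gamma> n a a * toeplitz_form \<Gamma> n b b"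
proof -
  define A B C where "A = toeplitz_form \<Gamma> n a a" and "B = toeplitz_form \<Gamma> n a b"
    and "C = toeplitz_form \<Gamma> n b b"
  have "0 \<le> toeplitz_form \<Gamma> n (\<lambda>k. B * a k + (- A) * b k) (\<lambda>k. B * a k + (- A) * b k)"
    by (rule psd)
  also have "\<dots> = A * (A * C - B\<^sup>2)"
    unfolding toeplitz_form_combination toeplitz_form_commute[where \<Gamma>=\<Gamma>, OF sym, of n b a]
    by (simp add: A_def B_def C_def power2_eq_square algebra_simps)
  finally show ?thesis
    using pos by (simp add: A_def B_def C_def zero_le_mult_iff)
qed

lemma covA_eq_toeplitz_form: "covA \<Gamma> n x = toeplitz_form \<Gamma> n (\<lambda>k. x ^ k) (\<lambda>k. x ^ k)"
  unfolding covA_def toeplitz_form_def by (simp add: power_add mult.assoc)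

lemma covB_eq_toeplitz_form:
  "covB \<Gamma> n x = toeplitz_form \<Gamma> n (\<lambda>k. real k * x ^ (k - 1)) (\<lambda>k. x ^ k)"
  unfolding covB_def toeplitz_form_def
proof (intro sum.cong refl)
  fix k j :: nat
  show "\<Gamma> (int k - int j) * real k * x ^ (k + j - 1) =
      \<Gamma> (int k - int j) * (real k * x ^ (k - 1)) * x ^ j"
    by (cases k) (simp_all add: power_add)
qed

lemma covC_eq_toeplitz_form:
  "covC \<Gamma> n x = toeplitz_form \<Gamma> n (\<lambda>k. real k * x ^ (k - 1)) (\<lambda>k. real k * x ^ (k - 1))"
  unfolding covC_def toeplitz_form_def
proof (intro sum.cong refl)
  fix k j :: nat
  show "\<Gamma> (int k - int j) * real k * real j * x ^ (k + j - 2) =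
      \<Gamma> (int k - int j) * (real k * x ^ (k - 1)) * (real j * x ^ (j - 1))"
    by (cases k; cases j) (simp_all add: power_add)
qed

lemma power_sum_lessThan_Suc_shift:
  fixes y :: real
  shows "(\<Sum>k<Suc n. c k * y ^ k) = c 0 + y * (\<Sum>k<n. c (Suc k) * y ^ k)"
  by (subst sum.lessThan_Suc_shift) (simp add: sum_distrib_left mult_ac del: sum.lessThan_Suc)

lemma weighted_power_sums_le:
  fixes y :: real
  assumes y: "0 \<le> y"
  shows "(\<Sum>k<n. (real k + 1) * y ^ k) \<le> (\<Sum>k<n. y ^ k)\<^sup>2 \<and>
    (\<Sum>k<n. (real k + 1) * (real k + 2) / 2 * y ^ k) \<le> (\<Sum>k<n. y ^ k) ^ 3"
proof (induction n)
  txt \<open>Coefficientwise domination: \<open>k + 1\<close> and \<open>(k + 1)(k + 2)/2\<close> count the ways of writing \<open>k\<close>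
    as a sum of two and of three naturals. The induction uses that each coefficient sequence is the
    sequence of partial sums of the previous one.\<close>
  case (Suc n)
  define s s' t t' u u' where
    "s = (\<Sum>k<n. y ^ k)" and "s' = (\<Sum>k<Suc n. y ^ k)" and
    "t = (\<Sum>k<n. (real k + 1) * y ^ k)" and "t' = (\<Sum>k<Suc n. (real k + 1) * y ^ k)" and
    "u = (\<Sum>k<n. (real k + 1) * (real k + 2) / 2 * y ^ k)" and
    "u' = (\<Sum>k<Suc n. (real k + 1) * (real k + 2) / 2 * y ^ k)"
  have s': "s' = 1 + y * s"
    using power_sum_lessThan_Suc_shift[of "\<lambda>_. 1" y n] by (simp add: s_def s'_def)
  have "(\<Sum>k<n. (real (Suc k) + 1) * y ^ k) = (\<Sum>k<n. y ^ k + (real k + 1) * y ^ k)"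
    by (intro sum.cong) (simp_all add: algebra_simps)
  then have t': "t' = s' + y * t"
    using power_sum_lessThan_Suc_shift[of "\<lambda>k. real k + 1" y n] s'
    by (simp add: t'_def s_def t_def sum.distrib sum_distrib_left algebra_simps)
  have "(\<Sum>k<n. (real (Suc k) + 1) * (real (Suc k) + 2) / 2 * y ^ k) =
      (\<Sum>k<n. (y ^ k + (real k + 1) * y ^ k) + (real k + 1) * (real k + 2) / 2 * y ^ k)"
    by (intro sum.cong) (simp_all add: field_simps)
  then have u': "u' = t' + y * u"
    using power_sum_lessThan_Suc_shift[of "\<lambda>k. (real k + 1) * (real k + 2) / 2" y n]
      power_sum_lessThan_Suc_shift[of "\<lambda>k. real k + 1" y n]
    by (simp add: t'_def u'_def u_def sum.distrib algebra_simps)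
  have s: "0 \<le> s" "s \<le> s'"
    using y by (simp_all add: s_def s'_def sum_nonneg)
  have "s\<^sup>2 \<le> s * s'" and "s ^ 3 \<le> s * s'\<^sup>2"
    using s by (auto simp: power2_eq_square power3_eq_cube mult.assoc intro!: mult_left_mono mult_mono)
  moreover have "t \<le> s\<^sup>2" and "u \<le> s ^ 3"
    using Suc.IH by (simp_all add: s_def t_def u_def)
  ultimately have "y * t \<le> y * (s * s')" and "y * u \<le> y * (s * s'\<^sup>2)"
    using y by (simp_all add: mult_left_mono)
  then have "t' \<le> s'\<^sup>2" and "u' \<le> s' ^ 3"
    using s' t' u' by (simp_all add: power2_eq_square power3_eq_cube algebra_simps)
  then show ?case
    by (simp add: s'_def t'_def u'_def)
qed simp

lemma sum_square_mult_power_le_cube: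
  fixes y :: real
  assumes y: "0 \<le> y"
  shows "(\<Sum>k\<le>n. (real k)\<^sup>2 * y ^ (k - 1)) \<le> 2 * (\<Sum>k\<le>n. y ^ k) ^ 3"
proof -
  have "(\<Sum>k\<le>n. (real k)\<^sup>2 * y ^ (k - 1)) = (\<Sum>k<n. (real k + 1)\<^sup>2 * y ^ k)"
    unfolding lessThan_Suc_atMost[symmetric]
    by (subst sum.lessThan_Suc_shift) (simp add: add.commute del: sum.lessThan_Suc)
  also have "\<dots> \<le> 2 * (\<Sum>k<n. (real k + 1) * (real k + 2) / 2 * y ^ k)"
    using y by (auto simp: sum_distrib_left power2_eq_square intro!: sum_mono mult_right_mono)
  also have "\<dots> \<le> 2 * (\<Sum>k<n. y ^ k) ^ 3"
    using weighted_power_sums_le[OF y] by simp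
  also have "\<dots> \<le> 2 * (\<Sum>k\<le>n. y ^ k) ^ 3"
    using y by (auto intro!: power_mono sum_mono2 sum_nonneg)
  finally show ?thesis .
qed

lemma geometric_sum_mult_le:
  fixes y :: real
  assumes "0 \<le> y" "y \<le> 1"
  shows "(\<Sum>k\<le>n. y ^ k) * (1 / (real n + 1) + (1 - y)) \<le> 2"
proof -
  have "(\<Sum>k\<le>n. y ^ k) \<le> (\<Sum>k\<le>n. 1)"
    using assms by (intro sum_mono) (simp add: power_le_one)
  then have "(\<Sum>k\<le>n. y ^ k) / (real n + 1) \<le> 1"
    by simp
  moreover have "(\<Sum>k\<le>n. y ^ k) * (1 - y) \<le> 1"
    using sum_gp_basic[of y n] assms by (simp add: mult.commute)
  moreover have "(\<Sum>k\<le>n. y ^ k) * (1 / (real n + 1) + (1 - y)) =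
      (\<Sum>k\<le>n. y ^ k) / (real n + 1) + (\<Sum>k\<le>n. y ^ k) * (1 - y)"
    by (simp add: distrib_left)
  ultimately show ?thesis
    by linarith
qed

lemma one_le_power_sum:
  fixes y :: real
  assumes "0 \<le> y"
  shows "1 \<le> (\<Sum>k\<le>n. y ^ k)"
proof -
  have "y ^ 0 \<le> (\<Sum>k\<le>n. y ^ k)"
    using assms by (intro member_le_sum) auto
  then show ?thesis
    by simp
qed

section \<open>Pointwise bound on \<open>F2\<close>\<close>

lemma covariance_bounds:
  fixes \<Gamma> :: "int \<Rightarrow> real" and x lo hi :: real
  assumes sym: "\<And>k. \<Gamma> (- k) = \<Gamma> k"
    and bnd: "toeplitz_form_bounded \<Gamma> n lo hi" and lo: "0 < lo"
  defines "S \<equiv> \<Sum>k\<le>n. (x\<^sup>2) ^ k"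
  shows "lo * S \<le> covA \<Gamma> n x" and "covA \<Gamma> n x \<le> hi * S"
    and "(covB \<Gamma> n x)\<^sup>2 \<le> covA \<Gamma> n x * covC \<Gamma> n x"
    and "(covB \<Gamma> n x)\<^sup>2 \<le> 2 * hi\<^sup>2 * S ^ 4"
proof -
  define u v where "u = (\<lambda>k. x ^ k)" and "v = (\<lambda>k. real k * x ^ (k - 1))"
  note form_bounds = bnd[unfolded toeplitz_form_bounded_def, rule_format]
  have psd: "0 \<le> toeplitz_form \<Gamma> n a a" for a
    using toeplitz_form_bounded_nonneg[OF bnd] lo by simp
  have "(\<Sum>k\<le>n. (u k)\<^sup>2) = S"
    by (simp add: S_def u_def mult.commute flip: power_mult)
  then show A_lower: "lo * S \<le> covA \<Gamma> n x" and A_upper: "covA \<Gamma> n x \<le> hi * S"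
    using form_bounds[of u] by (simp_all add: covA_eq_toeplitz_form u_def)
  have "1 \<le> S"
    unfolding S_def by (simp add: one_le_power_sum)
  then have A_pos: "0 < covA \<Gamma> n x"
    using A_lower lo by (smt (verit) mult_le_cancel_left1)
  have B_eq: "covB \<Gamma> n x = toeplitz_form \<Gamma> n u v"
    unfolding covB_eq_toeplitz_form u_def v_def by (rule toeplitz_form_commute[where \<Gamma>=\<Gamma>, OF sym])
  show CS: "(covB \<Gamma> n x)\<^sup>2 \<le> covA \<Gamma> n x * covC \<Gamma> n x"
    using toeplitz_form_Cauchy_Schwarz[where \<Gamma>=\<Gamma>, OF sym psd, of u v] A_pos
    by (simp add: B_eq covA_eq_toeplitz_form covC_eq_toeplitz_form u_def v_def)
  have "(\<Sum>k\<le>n. (v k)\<^sup>2) = (\<Sum>k\<le>n. (real k)\<^sup>2 * (x\<^sup>2) ^ (k - 1))"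
    by (simp add: v_def power_mult_distrib mult.commute flip: power_mult)
  moreover have "0 \<le> hi"
    using toeplitz_form_bounded_le[OF bnd] lo by linarith
  ultimately have "covC \<Gamma> n x \<le> hi * (2 * S ^ 3)"
    using form_bounds[of v] sum_square_mult_power_le_cube[of "x\<^sup>2" n]
    by (simp add: covC_eq_toeplitz_form v_def S_def) (smt (verit) mult_left_mono)
  then have "covA \<Gamma> n x * covC \<Gamma> n x \<le> (hi * S) * (hi * (2 * S ^ 3))"
    using A_upper A_pos psd[of v] by (intro mult_mono) (simp_all add: covC_eq_toeplitz_form v_def)
  then show "(covB \<Gamma> n x)\<^sup>2 \<le> 2 * hi\<^sup>2 * S ^ 4"
    using CS by (simp add: power2_eq_square power3_eq_cube power4_eq_xxxx mult_ac)
qed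

lemma exp_neg_le_inverse_one_plus:
  fixes z :: real
  assumes "0 \<le> z"
  shows "exp (- z) \<le> 1 / (1 + z)"
  using exp_ge_add_one_self[of z] assms by (simp add: exp_minus divide_simps)

lemma powr_three_halves:
  fixes a :: real
  assumes "0 \<le> a"
  shows "a powr (3/2) = a * sqrt a"
proof -
  have "a powr (3/2) = a powr (1 + 1/2)"
    by simp
  also have "\<dots> = a powr 1 * a powr (1/2)"
    by (rule powr_add)
  finally show ?thesis
    using assms by (simp add: powr_half_sqrt)
qed

lemma abs_F2_le:
  fixes \<Gamma> :: "int \<Rightarrow> real" and K x lo hi S :: real
  assumes lo: "0 < lo" and S: "0 < S"
    and A_lower: "lo * S \<le> covA \<Gamma> n x" and A_upper: "covA \<Gamma> n x \<le> hi * S"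
    and CS: "(covB \<Gamma> n x)\<^sup>2 \<le> covA \<Gamma> n x * covC \<Gamma> n x"
    and B_upper: "(covB \<Gamma> n x)\<^sup>2 \<le> 2 * hi\<^sup>2 * S ^ 4"
  shows "\<bar>F2 \<Gamma> n K x\<bar> \<le> 4 * hi\<^sup>2 / (pi * (lo * sqrt lo)) * (\<bar>K\<bar> * (S * sqrt S) / (2 * hi * S + K\<^sup>2))"
proof -
  define A B C where "A = covA \<Gamma> n x" and "B = covB \<Gamma> n x" and "C = covC \<Gamma> n x"
  define e where "e = erf (\<bar>B * K\<bar> / sqrt (2 * A * (A * C - B\<^sup>2)))"
  have A: "0 < A"
    using A_lower lo S unfolding A_def by (smt (verit) mult_pos_pos)
  have hi: "0 < hi"
    using A A_upper S unfolding A_def by (smt (verit) mult_nonpos_nonneg)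
  txt \<open>Cauchy-Schwarz is needed here: \<open>sqrt\<close> of a negative real is negative in HOL.\<close>
  have e: "0 \<le> e" "e \<le> 1"
    using A CS unfolding e_def A_def B_def C_def by (simp_all add: erf_nonneg erf_le_1)
  have F2_eq: "\<bar>F2 \<Gamma> n K x\<bar> = sqrt 2 * \<bar>B\<bar> * \<bar>K\<bar> * exp (- K\<^sup>2 / (2 * A)) * e / (pi * (A * sqrt A))"
    using A e unfolding F2_def Let_def A_def[symmetric] B_def[symmetric] C_def[symmetric] e_def[symmetric]
    by (simp add: powr_three_halves abs_mult)
  have "sqrt (S ^ 4) = S\<^sup>2"
    using real_sqrt_abs[of "S\<^sup>2"] by (simp flip: power_mult)
  then have "\<bar>B\<bar> \<le> sqrt 2 * hi * S\<^sup>2"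
    using real_sqrt_le_mono[OF B_upper[folded B_def]] hi by (simp add: real_sqrt_mult)
  moreover have "exp (- K\<^sup>2 / (2 * A)) \<le> 2 * hi * S / (2 * hi * S + K\<^sup>2)"
  proof -
    have "exp (- K\<^sup>2 / (2 * A)) \<le> exp (- (K\<^sup>2 / (2 * hi * S)))"
      using A A_upper S hi unfolding A_def by (auto intro!: divide_left_mono mult_pos_pos)
    also have "\<dots> \<le> 1 / (1 + K\<^sup>2 / (2 * hi * S))"
      using hi S by (intro exp_neg_le_inverse_one_plus) simp
    also have "\<dots> = 2 * hi * S / (2 * hi * S + K\<^sup>2)"
      using hi S by (simp add: field_simps)
    finally show ?thesis .
  qed
  ultimately have "sqrt 2 * \<bar>B\<bar> * \<bar>K\<bar> * exp (- K\<^sup>2 / (2 * A)) * e \<le>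
      sqrt 2 * (sqrt 2 * hi * S\<^sup>2) * \<bar>K\<bar> * (2 * hi * S / (2 * hi * S + K\<^sup>2)) * 1"
    using e hi S by (intro mult_mono) (auto intro!: divide_nonneg_nonneg)
  moreover have "pi * (lo * S * sqrt (lo * S)) \<le> pi * (A * sqrt A)"
    using A_lower A lo S unfolding A_def by (intro mult_left_mono mult_mono) auto
  ultimately have "\<bar>F2 \<Gamma> n K x\<bar> \<le>
      sqrt 2 * (sqrt 2 * hi * S\<^sup>2) * \<bar>K\<bar> * (2 * hi * S / (2 * hi * S + K\<^sup>2)) * 1
        / (pi * (lo * S * sqrt (lo * S)))"
    unfolding F2_eq using lo S hi by (intro frac_le) auto
  also have "\<dots> = 4 * hi\<^sup>2 / (pi * (lo * sqrt lo)) * (\<bar>K\<bar> * (S * sqrt S) / (2 * hi * S + K\<^sup>2))"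
  proof -
    obtain q where q: "0 < q" "S = q\<^sup>2"
      using S real_sqrt_pow2[of S] by (metis less_eq_real_def real_sqrt_gt_zero)
    have "0 < 2 * hi * q\<^sup>2 + K\<^sup>2"
      using hi q by (simp add: add_pos_nonneg)
    then show ?thesis
      unfolding q(2) using q lo hi
      by (simp add: real_sqrt_mult divide_simps) (simp add: mult.assoc[symmetric] power4_eq_xxxx power2_eq_square)
  qed
  finally show ?thesis .
qed

section \<open>An integrable majorant\<close>

text \<open>Its integral over \<open>w > 0\<close> is \<open>\<pi>/\<surd>c\<close> for every \<open>K\<close>; see \<open>decay_kernel_antiderivative\<close>.\<close>

definition decay_kernel :: "real \<Rightarrow> real \<Rightarrow> real \<Rightarrow> real" where
  "decay_kernel c K w = \<bar>K\<bar> / (sqrt w * (c + K\<^sup>2 * w))"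

lemma decay_kernel_nonneg: "0 \<le> c \<Longrightarrow> 0 \<le> w \<Longrightarrow> 0 \<le> decay_kernel c K w"
  by (simp add: decay_kernel_def)

lemma decay_kernel_antimono:
  assumes "0 < c" "0 < w0" "w0 \<le> w"
  shows "decay_kernel c K w \<le> decay_kernel c K w0"
  unfolding decay_kernel_def
  using assms by (intro divide_left_mono mult_mono add_left_mono mult_left_mono mult_pos_pos)
    (auto simp: add_pos_nonneg)

lemma decay_kernel_antiderivative:
  assumes c: "0 < c" and w: "0 < w"
  shows "((\<lambda>w. 2 / sqrt c * arctan (\<bar>K\<bar> * sqrt w / sqrt c)) has_real_derivative
    decay_kernel c K w) (at w)"
proof -
  have "((\<lambda>w. 2 / sqrt c * arctan (\<bar>K\<bar> * sqrt w / sqrt c)) has_real_derivative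
      2 / sqrt c * (inverse (1 + (\<bar>K\<bar> * sqrt w / sqrt c)\<^sup>2) * (\<bar>K\<bar> * (inverse (sqrt w) / 2) / sqrt c))) (at w)"
    using w by (intro DERIV_cmult DERIV_chain2[OF DERIV_arctan] DERIV_cdivide DERIV_real_sqrt)
  moreover have "2 / sqrt c * (inverse (1 + (\<bar>K\<bar> * sqrt w / sqrt c)\<^sup>2) * (\<bar>K\<bar> * (inverse (sqrt w) / 2) / sqrt c))
      = decay_kernel c K w"
  proof -
    obtain r q where "0 < r" "c = r\<^sup>2" "0 < q" "w = q\<^sup>2"
      using c w by (metis real_sqrt_gt_zero real_sqrt_pow2 less_eq_real_def)
    moreover have "0 < q * (r\<^sup>2 + K\<^sup>2 * q\<^sup>2)"
      using \<open>0 < r\<close> \<open>0 < q\<close> by (simp add: add_pos_nonneg)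
    ultimately show ?thesis
      by (simp add: decay_kernel_def field_simps power2_eq_square)
  qed
  ultimately show ?thesis
    by simp
qed

lemma decay_kernel_pair_integral:
  assumes c: "0 < c" and \<epsilon>: "0 < \<epsilon>"
  obtains I where
    "((\<lambda>x. decay_kernel c K (\<epsilon> + 1 - x) + decay_kernel c K (\<epsilon> + 1 + x)) has_integral I) {-1..1}"
    and "I \<le> 2 * (pi / sqrt c)"
proof -
  define H where "H w = 2 / sqrt c * arctan (\<bar>K\<bar> * sqrt w / sqrt c)" for w
  have H': "(H has_real_derivative decay_kernel c K w) (at w)" if "0 < w" for w
    unfolding H_def[abs_def] using decay_kernel_antiderivative[OF c that] .
  have "((\<lambda>x. decay_kernel c K (\<epsilon> + 1 - x) + decay_kernel c K (\<epsilon> + 1 + x)) has_integral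
      (- H (\<epsilon> + 1 - 1) + H (\<epsilon> + 1 + 1)) - (- H (\<epsilon> + 1 - (-1)) + H (\<epsilon> + 1 + (-1)))) {-1..1}"
  proof (rule fundamental_theorem_of_calculus)
    fix x :: real
    assume "x \<in> {-1..1}"
    then have pos: "0 < \<epsilon> + 1 - x" "0 < \<epsilon> + 1 + x"
      using \<epsilon> by auto
    have "((\<lambda>x. H (\<epsilon> + 1 - x)) has_real_derivative decay_kernel c K (\<epsilon> + 1 - x) * (- 1)) (at x)"
      by (rule DERIV_chain2[of H _ "\<lambda>x. \<epsilon> + 1 - x", OF H'[OF pos(1)]]) (auto intro!: derivative_eq_intros)
    moreover have "((\<lambda>x. H (\<epsilon> + 1 + x)) has_real_derivative decay_kernel c K (\<epsilon> + 1 + x) * 1) (at x)"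
      by (rule DERIV_chain2[of H _ "\<lambda>x. \<epsilon> + 1 + x", OF H'[OF pos(2)]]) (auto intro!: derivative_eq_intros)
    ultimately have "((\<lambda>x. - H (\<epsilon> + 1 - x) + H (\<epsilon> + 1 + x)) has_real_derivative
        decay_kernel c K (\<epsilon> + 1 - x) + decay_kernel c K (\<epsilon> + 1 + x)) (at x)"
      using DERIV_add[OF DERIV_minus] by fastforce
    then show "((\<lambda>x. - H (\<epsilon> + 1 - x) + H (\<epsilon> + 1 + x)) has_vector_derivative
        decay_kernel c K (\<epsilon> + 1 - x) + decay_kernel c K (\<epsilon> + 1 + x)) (at x within {-1..1})"
      by (simp add: has_real_derivative_iff_has_vector_derivative[symmetric] has_field_derivative_at_within)
  qed simp
  moreover have "H (\<epsilon> + 2) \<le> pi / sqrt c" and "0 \<le> H \<epsilon>"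
    using arctan_ubound[of "\<bar>K\<bar> * sqrt (\<epsilon> + 2) / sqrt c"] c \<epsilon>
    by (simp_all add: H_def divide_right_mono mult.commute)
  then have "H (\<epsilon> + 2) - H \<epsilon> \<le> pi / sqrt c"
    by linarith
  ultimately show ?thesis
    by (intro that[of "2 * (H (\<epsilon> + 2) - H \<epsilon>)"]) (simp_all add: algebra_simps del: times_divide_eq_right)
qed

lemma power_three_halves_ratio_le:
  fixes c S w K :: real
  assumes c: "0 < c" and S: "0 < S" and w: "0 < w" and Sw: "S * w \<le> 2"
  shows "\<bar>K\<bar> * (S * sqrt S) / (c * S + K\<^sup>2) \<le> 2 * sqrt 2 * decay_kernel (2 * c) K w"
proof -
  define r where "r = sqrt (S * w)"
  have r: "0 \<le> r" "r \<le> sqrt 2" "r\<^sup>2 = S * w"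
    using S w Sw by (simp_all add: r_def)
  have sqrt_Sw: "sqrt S * sqrt w = r"
    by (simp add: r_def real_sqrt_mult)
  have "S * sqrt S * (sqrt w * (2 * c + K\<^sup>2 * w)) = 2 * c * S * r + K\<^sup>2 * (r * r\<^sup>2)"
    unfolding r(3) sqrt_Sw[symmetric] using S w by (simp add: algebra_simps)
  also have "\<dots> \<le> 2 * c * S * sqrt 2 + K\<^sup>2 * (sqrt 2 * 2)"
    using r Sw c S w by (intro add_mono mult_left_mono mult_mono) auto
  also have "\<dots> = 2 * sqrt 2 * (c * S + K\<^sup>2)"
    by (simp add: algebra_simps)
  finally have "\<bar>K\<bar> * (S * sqrt S * (sqrt w * (2 * c + K\<^sup>2 * w))) \<le> \<bar>K\<bar> * (2 * sqrt 2 * (c * S + K\<^sup>2))"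
    by (rule mult_left_mono) simp
  moreover have "0 < c * S + K\<^sup>2" and "0 < sqrt w * (2 * c + K\<^sup>2 * w)"
    using c S w by (simp_all add: add_pos_nonneg)
  ultimately show ?thesis
    unfolding decay_kernel_def by (simp add: field_simps)
qed

lemma decay_kernel_le_pair:
  assumes c: "0 < c" and \<epsilon>: "0 < \<epsilon>" and x: "x \<in> {-1..1}"
  shows "decay_kernel c K (\<epsilon> + 1 - x\<^sup>2) \<le> decay_kernel c K (\<epsilon> + 1 - x) + decay_kernel c K (\<epsilon> + 1 + x)"
proof (cases "0 \<le> x")
  case True
  then have "x\<^sup>2 \<le> x"
    using x by (simp add: power2_eq_square mult_left_le_one_le)
  then have "decay_kernel c K (\<epsilon> + 1 - x\<^sup>2) \<le> decay_kernel c K (\<epsilon> + 1 - x)"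
    using c \<epsilon> x by (intro decay_kernel_antimono) auto
  moreover have "0 \<le> decay_kernel c K (\<epsilon> + 1 + x)"
    using c \<epsilon> True by (intro decay_kernel_nonneg) auto
  ultimately show ?thesis
    by linarith
next
  case False
  then have "x\<^sup>2 \<le> - x"
    using x mult_right_mono[of "- x" 1 "- x"] by (simp add: power2_eq_square)
  then have "decay_kernel c K (\<epsilon> + 1 - x\<^sup>2) \<le> decay_kernel c K (\<epsilon> + 1 + x)"
    using c \<epsilon> x by (intro decay_kernel_antimono) auto
  moreover have "0 \<le> decay_kernel c K (\<epsilon> + 1 - x)"
    using c \<epsilon> x by (intro decay_kernel_nonneg) auto
  ultimately show ?thesis
    by linarith
qed

lemma abs_F2_le_decay_kernel:
  fixes \<Gamma> :: "int \<Rightarrow> real" and K x lo hi :: real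
  assumes sym: "\<And>k. \<Gamma> (- k) = \<Gamma> k" and bnd: "toeplitz_form_bounded \<Gamma> n lo hi" and lo: "0 < lo"
    and x: "x \<in> {-1..1}"
  defines "\<epsilon> \<equiv> 1 / (real n + 1)"
  shows "\<bar>F2 \<Gamma> n K x\<bar> \<le> 8 * sqrt 2 * hi\<^sup>2 / (pi * (lo * sqrt lo)) *
    (decay_kernel (4 * hi) K (\<epsilon> + 1 - x) + decay_kernel (4 * hi) K (\<epsilon> + 1 + x))"
proof -
  define S where "S = (\<Sum>k\<le>n. (x\<^sup>2) ^ k)"
  have hi: "0 < hi"
    using toeplitz_form_bounded_le[OF bnd] lo by linarith
  have S: "1 \<le> S"
    unfolding S_def by (simp add: one_le_power_sum)
  have \<epsilon>: "0 < \<epsilon>"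
    by (simp add: \<epsilon>_def)
  have x2: "0 \<le> x\<^sup>2" "x\<^sup>2 \<le> 1"
    using x by (auto simp: abs_square_le_1)
  have "\<bar>F2 \<Gamma> n K x\<bar> \<le> 4 * hi\<^sup>2 / (pi * (lo * sqrt lo)) * (\<bar>K\<bar> * (S * sqrt S) / (2 * hi * S + K\<^sup>2))"
    using S lo covariance_bounds[OF sym bnd lo, of x] unfolding S_def by (intro abs_F2_le) auto
  also have "\<dots> \<le> 4 * hi\<^sup>2 / (pi * (lo * sqrt lo)) * (2 * sqrt 2 * decay_kernel (4 * hi) K (\<epsilon> + 1 - x\<^sup>2))"
  proof (intro mult_left_mono)
    have "S * (\<epsilon> + 1 - x\<^sup>2) \<le> 2"
      using geometric_sum_mult_le[OF x2, of n] by (simp add: S_def \<epsilon>_def algebra_simps)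
    then show "\<bar>K\<bar> * (S * sqrt S) / (2 * hi * S + K\<^sup>2) \<le> 2 * sqrt 2 * decay_kernel (4 * hi) K (\<epsilon> + 1 - x\<^sup>2)"
      using power_three_halves_ratio_le[of "2 * hi" S "\<epsilon> + 1 - x\<^sup>2" K] hi S \<epsilon> x2 by simp
  qed (use lo in simp)
  also have "\<dots> \<le> 4 * hi\<^sup>2 / (pi * (lo * sqrt lo)) * (2 * sqrt 2 *
      (decay_kernel (4 * hi) K (\<epsilon> + 1 - x) + decay_kernel (4 * hi) K (\<epsilon> + 1 + x)))"
    using decay_kernel_le_pair[of "4 * hi" \<epsilon> x K] hi \<epsilon> x lo by (intro mult_left_mono) auto
  finally show ?thesis
    by (simp add: mult_ac)
qed

lemma abs_integral_F2_le:
  fixes \<Gamma> :: "int \<Rightarrow> real" and lo hi :: real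
  assumes sym: "\<And>k. \<Gamma> (- k) = \<Gamma> k" and bnd: "toeplitz_form_bounded \<Gamma> n lo hi" and lo: "0 < lo"
  shows "\<bar>integral {-1..1} (F2 \<Gamma> n K)\<bar> \<le> 8 * sqrt 2 * (hi * sqrt hi) / (lo * sqrt lo)"
proof -
  define \<epsilon> c D where "\<epsilon> = 1 / (real n + 1)" and "c = 4 * hi"
    and "D = 8 * sqrt 2 * hi\<^sup>2 / (pi * (lo * sqrt lo))"
  define g where "g x = D * (decay_kernel c K (\<epsilon> + 1 - x) + decay_kernel c K (\<epsilon> + 1 + x))" for x
  have c: "0 < c"
    using toeplitz_form_bounded_le[OF bnd] lo by (simp add: c_def)
  have D: "0 \<le> D"
    using lo by (simp add: D_def)
  obtain I where I: "((\<lambda>x. decay_kernel c K (\<epsilon> + 1 - x) + decay_kernel c K (\<epsilon> + 1 + x)) has_integral I) {-1..1}"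
    and I_le: "I \<le> 2 * (pi / sqrt c)"
    using decay_kernel_pair_integral[OF c, of \<epsilon> K] by (auto simp: \<epsilon>_def)
  have g: "(g has_integral D * I) {-1..1}"
    unfolding g_def by (rule has_integral_mult_right[OF I])
  have "D * I \<le> D * (2 * (pi / sqrt c))"
    using I_le D by (rule mult_left_mono)
  also have "\<dots> = 8 * sqrt 2 * (hi * sqrt hi) / (lo * sqrt lo)"
  proof -
    define q where "q = sqrt hi"
    have q: "0 < q" "hi = q\<^sup>2"
      using c by (simp_all add: q_def c_def)
    show ?thesis
      unfolding D_def c_def q(2) using q(1) lo by (simp add: real_sqrt_mult field_simps power2_eq_square)
  qed
  finally have DI: "D * I \<le> 8 * sqrt 2 * (hi * sqrt hi) / (lo * sqrt lo)" .
  show ?thesis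
  proof (cases "F2 \<Gamma> n K integrable_on {-1..1}")
    case True
    have "norm (integral {-1..1} (F2 \<Gamma> n K)) \<le> integral {-1..1} g"
      using abs_F2_le_decay_kernel[OF sym bnd lo] g
      by (intro integral_norm_bound_integral[OF True]) (auto simp: g_def D_def c_def \<epsilon>_def)
    then show ?thesis
      using integral_unique[OF g] DI by simp
  next
    case False
    then show ?thesis
      using lo c by (simp add: not_integrable_integral c_def)
  qed
qed

theorem lemma2p1:
  fixes \<Gamma> :: "int \<Rightarrow> real" and f :: "real \<Rightarrow> real" and K :: "nat \<Rightarrow> real"
  assumes f_cont: "continuous_on {-pi..pi} f"
    and f_pos: "\<forall>\<phi>\<in>{-pi..pi}. f \<phi> > 0"
    and spectral: "\<forall>k. complex_of_real (\<Gamma> k) =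
        integral {-pi..pi} (\<lambda>\<phi>. exp (- \<i> * of_int k * of_real \<phi>) * of_real (f \<phi>))"
    and \<Gamma>0: "\<Gamma> 0 = 1"
    and K_small: "K \<in> o(\<lambda>n. sqrt (real n / ln (ln (real n))))"
  shows "(\<lambda>n. integral {-1..1} (F2 \<Gamma> n (K n))) \<in> o(\<lambda>n. ln (ln (real n)))"
proof -
  txt \<open>The integral is bounded uniformly in \<open>n\<close> and \<open>K\<close>.\<close>
  obtain \<phi>0 \<phi>1 where \<phi>: "\<phi>0 \<in> {-pi..pi}" "\<phi>1 \<in> {-pi..pi}"
    and f_bounds: "\<And>\<phi>. \<phi> \<in> {-pi..pi} \<Longrightarrow> f \<phi>0 \<le> f \<phi> \<and> f \<phi> \<le> f \<phi>1"
    using continuous_attains_inf[OF compact_Icc _ f_cont] continuous_attains_sup[OF compact_Icc _ f_cont]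
    by (metis atLeastAtMost_iff empty_iff neg_le_0_iff_le pi_ge_zero)
  have \<Gamma>: "((\<lambda>\<phi>. cos (of_int k * \<phi>) * f \<phi>) has_integral \<Gamma> k) {-pi..pi}" for k
    using spectral_density_cos_has_integral[OF f_cont] spectral by blast
  have sym: "\<Gamma> (- k) = \<Gamma> k" for k
    using \<Gamma>[of k] \<Gamma>[of "- k"] by (simp add: has_integral_unique)
  define lo hi where "lo = 2 * pi * f \<phi>0" and "hi = 2 * pi * f \<phi>1"
  have lo: "0 < lo"
    using f_pos \<phi> by (simp add: lo_def)
  have "toeplitz_form_bounded \<Gamma> n lo hi" for n
    unfolding lo_def hi_def using \<Gamma> f_bounds by (rule toeplitz_form_bounded_spectral_density)
  then have "(\<lambda>n. integral {-1..1} (F2 \<Gamma> n (K n))) \<in> O(\<lambda>_. 1)"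
    using abs_integral_F2_le[where \<Gamma>=\<Gamma>, OF sym _ lo]
    by (intro bigoI[where c = "8 * sqrt 2 * (hi * sqrt hi) / (lo * sqrt lo)"]) auto
  moreover have "(\<lambda>_. 1) \<in> o(\<lambda>n. ln (ln (real n)))"
    by real_asymp
  ultimately show ?thesis
    by (rule landau_o.big_small_trans)
qed

end
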